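(* Let $\boldsymbol{R}=[r_{ij}]\in\mathbb{C}^{N\times N}$ be Hermitian and $2N$-dominant, i.e. $r_{ii}\ge 2N\sum_{j\ne i}|r_{ij}|$ for all $i$. Define $\delta_1=0$ and $\delta_k=\sum_{i=1}^{k-1}|r_{ki}|$ for $k=2,\ldots,N$; define $a_k=2\delta_k+4\sum_{i=1}^{N-k}\delta_{k+i}$ for $k=1,\ldots,N-1$ and $a_N=2\delta_N$; and let $\overline{\boldsymbol{R}}=\boldsymbol{R}-\mathrm{Diag}(\boldsymbol{R})+\mathrm{diag}(a_1,\ldots,a_N)$. Let $\boldsymbol{g}\in\Omega^N$ be the output of the greedy method: $\boldsymbol{g}(1)=1$ and, for $k=1,\ldots,N-1$, $\boldsymbol{g}(k+1)$ is a maximizer over $x\in\Omega$ of $[\boldsymbol{g}(1),\ldots,\boldsymbol{g}(k),x]^H\boldsymbol{R}_{k+1}[\boldsymbol{g}(1),\ldots,\boldsymbol{g}(k),x]$. Then $\mathrm{Tr}(\overline{\boldsymbol{R}})\le\mathrm{Tr}(\boldsymbol{R})$ and \[ \boldsymbol{g}^H\boldsymbol{R}\boldsymbol{g}\ \ge\ \Big(1-\frac{1}{e}+\frac{1}{e}\cdot\frac{1}{2N+1}\Big)\max_{\boldsymbol{s}\in\Omega^N}\boldsymbol{s}^H\boldsymbol{R}\boldsymbol{s}. \]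
   Context: $\Omega=\{x\in\mathbb{C}:|x|=1\}$. $\boldsymbol{R}_m$ denotes the principal submatrix of $\boldsymbol{R}$ formed by its first $m$ rows and first $m$ columns, and $[c_1,\ldots,c_m]$ denotes the column vector with entries $c_1,\ldots,c_m$. A square matrix $[r_{ij}]_{N\times N}$ is $M$-dominant if $r_{ii}\ge M\sum_{j=1,j\ne i}^N|r_{ij}|$ for all $i$. $\mathrm{Diag}(\boldsymbol{R})$ is the diagonal matrix with the diagonal of $\boldsymbol{R}$; $\mathrm{diag}(a_1,\ldots,a_N)$ is the diagonal matrix with entries $a_1,\ldots,a_N$. $\mathrm{Tr}$ is the trace. Empty sums are zero. *)

theory Defs
  imports "HOL-Analysis.Analysis"
begin

text \<open>Matrices/vectors of size N are functions on nat indexed by 1..N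
  (entries outside {1..N} are irrelevant).\<close>

definition Omega :: "complex set" where
  "Omega = {x. cmod x = 1}"

definition hermitian :: "nat \<Rightarrow> (nat \<Rightarrow> nat \<Rightarrow> complex) \<Rightarrow> bool" where
  "hermitian N R \<longleftrightarrow> (\<forall>i\<in>{1..N}. \<forall>j\<in>{1..N}. R i j = cnj (R j i))"

text \<open>M-dominant: r_ii >= M * sum_{j /= i} |r_ij| (r_ii is real for Hermitian R;
  the comparison is on its real part).\<close>
definition dominant :: "real \<Rightarrow> nat \<Rightarrow> (nat \<Rightarrow> nat \<Rightarrow> complex) \<Rightarrow> bool" where
  "dominant M N R \<longleftrightarrow>
     (\<forall>i\<in>{1..N}. Re (R i i) \<ge> M * (\<Sum>j\<in>{1..N}-{i}. cmod (R i j)))"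

definition quad_form :: "nat \<Rightarrow> (nat \<Rightarrow> nat \<Rightarrow> complex) \<Rightarrow> (nat \<Rightarrow> complex) \<Rightarrow> complex" where
  "quad_form m R s = (\<Sum>i=1..m. \<Sum>j=1..m. cnj (s i) * R i j * s j)"

definition delta :: "(nat \<Rightarrow> nat \<Rightarrow> complex) \<Rightarrow> nat \<Rightarrow> real" where
  "delta R k = (\<Sum>i=1..k-1. cmod (R k i))"

definition a_coef :: "nat \<Rightarrow> (nat \<Rightarrow> nat \<Rightarrow> complex) \<Rightarrow> nat \<Rightarrow> real" where
  "a_coef N R k = 2 * delta R k + 4 * (\<Sum>i=1..N-k. delta R (k+i))"

definition Rbar :: "nat \<Rightarrow> (nat \<Rightarrow> nat \<Rightarrow> complex) \<Rightarrow> nat \<Rightarrow> nat \<Rightarrow> complex" where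
  "Rbar N R i j = R i j - (if i = j then R i i else 0) + (if i = j then complex_of_real (a_coef N R i) else 0)"

definition mtrace :: "nat \<Rightarrow> (nat \<Rightarrow> nat \<Rightarrow> complex) \<Rightarrow> complex" where
  "mtrace N R = (\<Sum>i=1..N. R i i)"

definition greedy_output :: "nat \<Rightarrow> (nat \<Rightarrow> nat \<Rightarrow> complex) \<Rightarrow> (nat \<Rightarrow> complex) \<Rightarrow> bool" where
  "greedy_output N R g \<longleftrightarrow> g 1 = 1 \<and>
     (\<forall>k\<in>{1..N-1}. g (k+1) \<in> Omega \<and>
        (\<forall>x\<in>Omega. Re (quad_form (k+1) R (g(k+1 := x))) \<le> Re (quad_form (k+1) R g)))"

end

theory Submission
  imports Defs
begin

text \<open>Let D be the trace and Off the total off-diagonal mass of R; dominance gives D \<ge> 2 N Off.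
  For unimodular s the value s^H R s differs from D by at most Off. For N \<ge> 3 the worst
  value D - Off is already at least the claimed fraction of the best conceivable value D + Off;
  for N \<le> 2 the greedy vector is exactly optimal, since quadratic forms are invariant under a
  common phase. For the trace, a_k is bounded by four times the sum of the delta_j, and for
  Hermitian R that sum is Off / 2.\<close>

lemma quad_form_cong:
  "(\<And>i. i \<in> {1..m} \<Longrightarrow> s i = t i) \<Longrightarrow> quad_form m R s = quad_form m R t"
  unfolding quad_form_def by (intro sum.cong refl) auto

lemma cnj_mult_self_Omega: "x \<in> Omega \<Longrightarrow> cnj x * x = 1"
  unfolding Omega_def by (simp add: complex_norm_square[symmetric] mult.commute)

lemma quad_form_rotate:
  assumes "c \<in> Omega"
  shows "quad_form m R (\<lambda>i. c * s i) = quad_form m R s"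
proof -
  have "quad_form m R (\<lambda>i. c * s i) = (cnj c * c) * quad_form m R s"
    unfolding quad_form_def by (simp add: sum_distrib_left algebra_simps)
  then show ?thesis using cnj_mult_self_Omega[OF assms] by simp
qed

lemma quad_form_unimodular_bound:
  assumes "\<forall>i\<in>{1..N}. s i \<in> Omega"
  shows "\<bar>Re (quad_form N R s) - (\<Sum>i=1..N. Re (R i i))\<bar>
     \<le> (\<Sum>i=1..N. \<Sum>j\<in>{1..N}-{i}. cmod (R i j))"
proof -
  let ?off = "\<Sum>i=1..N. \<Sum>j\<in>{1..N}-{i}. cnj (s i) * R i j * s j"
  have "quad_form N R s = (\<Sum>i=1..N. cnj (s i) * R i i * s i) + ?off"
    unfolding quad_form_def sum.distrib[symmetric]
    by (rule sum.cong) (auto simp: sum.remove)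
  also have "(\<Sum>i=1..N. cnj (s i) * R i i * s i) = (\<Sum>i=1..N. R i i)"
    using assms cnj_mult_self_Omega by (intro sum.cong) (auto simp: algebra_simps)
  finally have "Re (quad_form N R s) - (\<Sum>i=1..N. Re (R i i)) = Re ?off"
    by (simp add: Re_sum)
  also have "\<bar>Re ?off\<bar> \<le> cmod ?off"
    by (rule abs_Re_le_cmod)
  also have "\<dots> \<le> (\<Sum>i=1..N. \<Sum>j\<in>{1..N}-{i}. cmod (cnj (s i) * R i j * s j))"
    by (rule order_trans[OF norm_sum sum_mono]) (rule norm_sum)
  also have "\<dots> = (\<Sum>i=1..N. \<Sum>j\<in>{1..N}-{i}. cmod (R i j))"
    using assms by (intro sum.cong refl) (auto simp: norm_mult Omega_def)
  finally show ?thesis .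
qed

lemma dominant_diag_ge_offdiag:
  assumes "dominant M N R"
  shows "M * (\<Sum>i=1..N. \<Sum>j\<in>{1..N}-{i}. cmod (R i j)) \<le> (\<Sum>i=1..N. Re (R i i))"
  using assms unfolding dominant_def sum_distrib_left by (intro sum_mono) auto

lemma greedy_output_Omega:
  assumes "greedy_output N R g" and "i \<in> {1..N}"
  shows "g i \<in> Omega"
proof (cases "i = 1")
  case True
  then show ?thesis using assms(1) by (simp add: greedy_output_def Omega_def)
next
  case False
  then have "i - 1 \<in> {1..N-1}" and "i - 1 + 1 = i" using assms(2) by auto
  then show ?thesis using assms(1) unfolding greedy_output_def by metis
qed

lemma greedy_output_optimal_small:
  assumes "greedy_output N R g" and "1 \<le> N" "N \<le> 2" and "\<forall>i\<in>{1..N}. s i \<in> Omega"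
  shows "Re (quad_form N R s) \<le> Re (quad_form N R g)"
proof -
  define t where "t i = cnj (s 1) * s i" for i
  have s1: "s 1 \<in> Omega" using assms(2,4) by auto
  then have t1: "t 1 = 1" unfolding t_def by (rule cnj_mult_self_Omega)
  have "cnj (s 1) \<in> Omega" using s1 by (simp add: Omega_def)
  then have qt: "quad_form N R t = quad_form N R s"
    unfolding t_def by (rule quad_form_rotate)
  have g1: "g 1 = 1" using assms(1) by (simp add: greedy_output_def)
  show ?thesis
  proof (cases "N = 1")
    case True
    then have "quad_form N R t = quad_form N R g"
      using t1 g1 by (intro quad_form_cong) auto
    then show ?thesis using qt by simp
  next
    case False
    then have N2: "N = 2" using assms(2,3) by simp
    have "t 2 \<in> Omega" using assms(4) s1 N2 by (simp add: t_def Omega_def norm_mult)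
    moreover have "1 \<in> {1..N-1}" using N2 by simp
    then have "\<forall>x\<in>Omega. Re (quad_form (1+1) R (g(1+1 := x))) \<le> Re (quad_form (1+1) R g)"
      using assms(1) unfolding greedy_output_def by blast
    ultimately have "Re (quad_form 2 R (g(2 := t 2))) \<le> Re (quad_form 2 R g)"
      unfolding one_add_one by blast
    moreover have "quad_form 2 R t = quad_form 2 R (g(2 := t 2))"
    proof (rule quad_form_cong)
      fix i :: nat assume "i \<in> {1..2}"
      then have "i = 1 \<or> i = 2" by auto
      then show "t i = (g(2 := t 2)) i" using t1 g1 by auto
    qed
    ultimately show ?thesis using qt N2 by simp
  qed
qed

lemma hermitian_offdiag_sum_eq_twice_delta_sum:
  assumes "hermitian N R"
  shows "(\<Sum>i=1..N. \<Sum>j\<in>{1..N}-{i}. cmod (R i j)) = 2 * (\<Sum>k=1..N. delta R k)"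
proof -
  let ?low = "\<Sum>i=1..N. \<Sum>j\<in>{j\<in>{1..N}. j < i}. cmod (R i j)"
  let ?up = "\<Sum>i=1..N. \<Sum>j\<in>{j\<in>{1..N}. i < j}. cmod (R i j)"
  have split: "{1..N} - {i} = {j\<in>{1..N}. j < i} \<union> {j\<in>{1..N}. i < j}" for i
    by auto
  have "(\<Sum>i=1..N. \<Sum>j\<in>{1..N}-{i}. cmod (R i j)) = ?low + ?up"
    unfolding split sum.distrib[symmetric]
    by (intro sum.cong refl sum.union_disjoint) auto
  moreover have "?low = (\<Sum>k=1..N. delta R k)"
    unfolding delta_def
  proof (rule sum.cong[OF refl])
    fix i assume "i \<in> {1..N}"
    then have "{j\<in>{1..N}. j < i} = {1..i-1}" by auto
    then show "(\<Sum>j\<in>{j\<in>{1..N}. j < i}. cmod (R i j)) = (\<Sum>j=1..i-1. cmod (R i j))"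
      by simp
  qed
  moreover have "?up = ?low"
  proof -
    have "?up = (\<Sum>j=1..N. \<Sum>i\<in>{i\<in>{1..N}. i < j}. cmod (R i j))"
      by (rule sum.swap_restrict) simp_all
    also have "\<dots> = ?low"
      using assms unfolding hermitian_def
      by (intro sum.cong refl) (metis (no_types, lifting) complex_mod_cnj mem_Collect_eq)
    finally show ?thesis .
  qed
  ultimately show ?thesis by simp
qed

lemma a_coef_le_delta_sum:
  assumes "k \<in> {1..N}"
  shows "a_coef N R k \<le> 4 * (\<Sum>j=1..N. delta R j)"
proof -
  have delta_nonneg: "0 \<le> delta R j" for j
    unfolding delta_def by (intro sum_nonneg) auto
  have "(\<Sum>i=1..N-k. delta R (k+i)) = sum (delta R) ((+) k ` {1..N-k})"
    by (subst sum.reindex) auto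
  moreover have "delta R k + sum (delta R) ((+) k ` {1..N-k})
      = sum (delta R) (insert k ((+) k ` {1..N-k}))"
    by simp
  moreover have "\<dots> \<le> (\<Sum>j=1..N. delta R j)"
    using assms by (intro sum_mono2) (auto simp: delta_nonneg)
  ultimately show ?thesis
    unfolding a_coef_def using delta_nonneg[of k] by linarith
qed

lemma trace_Rbar_le_trace:
  assumes "hermitian N R" and "dominant (2 * real N) N R"
  shows "Re (mtrace N (Rbar N R)) \<le> Re (mtrace N R)"
proof -
  have "Re (mtrace N (Rbar N R)) = (\<Sum>k=1..N. a_coef N R k)"
    unfolding mtrace_def Rbar_def by (simp add: Re_sum)
  also have "\<dots> \<le> (\<Sum>k=1..N. 4 * (\<Sum>j=1..N. delta R j))"
    by (intro sum_mono a_coef_le_delta_sum)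
  also have "\<dots> = 2 * real N * (\<Sum>i=1..N. \<Sum>j\<in>{1..N}-{i}. cmod (R i j))"
    unfolding hermitian_offdiag_sum_eq_twice_delta_sum[OF assms(1)] by simp
  also have "\<dots> \<le> Re (mtrace N R)"
    using dominant_diag_ge_offdiag[OF assms(2)] by (simp add: mtrace_def Re_sum)
  finally show ?thesis .
qed

lemma approx_ratio_bounds:
  fixes n :: real
  assumes "0 \<le> n"
  shows "0 \<le> 1 - 1 / exp 1 + (1 / exp 1) * (1 / (2 * n + 1))"
    and "1 - 1 / exp 1 + (1 / exp 1) * (1 / (2 * n + 1)) \<le> 1"
proof -
  have u: "0 \<le> 1 / exp (1::real)" "1 / exp (1::real) \<le> 1"
    by (auto simp: field_simps)
  have v: "0 \<le> 1 / (2 * n + 1)" "1 / (2 * n + 1) \<le> 1"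
    using assms by (auto simp: field_simps)
  have "(1 / exp 1) * (1 / (2 * n + 1)) \<le> 1 / exp 1"
    by (rule mult_left_le[OF v(2) u(1)])
  moreover have "0 \<le> (1 / exp 1) * (1 / (2 * n + 1))"
    using u v by simp
  ultimately show "0 \<le> 1 - 1 / exp 1 + (1 / exp 1) * (1 / (2 * n + 1))"
    and "1 - 1 / exp 1 + (1 / exp 1) * (1 / (2 * n + 1)) \<le> 1"
    using u by linarith+
qed

text \<open>The argument uses e \<le> 3 \<le> n; for n = 2 the inequality is false.\<close>
lemma approx_ratio_dominant:
  fixes n d off :: real
  assumes "3 \<le> n" and "0 \<le> off" and "2 * n * off \<le> d"
  shows "(1 - 1 / exp 1 + (1 / exp 1) * (1 / (2 * n + 1))) * (d + off) \<le> d - off"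
proof -
  define u where "u = 1 / exp (1::real)"
  have "1 \<le> u * n"
    using exp_le assms(1) unfolding u_def by (simp add: field_simps)
  have pos: "0 < 2 * n + 1" using assms(1) by simp
  have "(2 * n + 1) * off \<le> d + off" using assms(3) by (simp add: algebra_simps)
  then have "off \<le> (d + off) / (2 * n + 1)" using pos by (simp add: field_simps)
  then have "u * (2 * n) * off \<le> u * (2 * n) * ((d + off) / (2 * n + 1))"
    using assms(1) by (intro mult_left_mono) (auto simp: u_def)
  moreover have "2 * off \<le> u * (2 * n) * off"
    using mult_right_mono[OF \<open>1 \<le> u * n\<close> assms(2)] by (simp add: algebra_simps)
  moreover have "d - off - (1 - u + u * (1 / (2 * n + 1))) * (d + off)
      = u * (2 * n) * ((d + off) / (2 * n + 1)) - 2 * off"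
    using pos by (simp add: field_simps)
  ultimately show ?thesis unfolding u_def by linarith
qed

theorem proposition2:
  fixes N :: nat and R :: "nat \<Rightarrow> nat \<Rightarrow> complex" and g :: "nat \<Rightarrow> complex"
  assumes "N \<ge> 1"
    and "hermitian N R"
    and "dominant (2 * real N) N R"
    and "greedy_output N R g"
  shows "Re (mtrace N (Rbar N R)) \<le> Re (mtrace N R)
    \<and> Re (quad_form N R g) \<ge>
        (1 - 1 / exp 1 + (1 / exp 1) * (1 / (2 * real N + 1)))
        * (SUP s\<in>{s. \<forall>i\<in>{1..N}. s i \<in> Omega}. Re (quad_form N R s))"
proof -
  define D where "D = (\<Sum>i=1..N. Re (R i i))"
  define Off where "Off = (\<Sum>i=1..N. \<Sum>j\<in>{1..N}-{i}. cmod (R i j))"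
  define c where "c = 1 - 1 / exp 1 + (1 / exp 1) * (1 / (2 * real N + 1))"
  let ?S = "{s. \<forall>i\<in>{1..N}. s i \<in> Omega}"
  have Off_nonneg: "0 \<le> Off" unfolding Off_def by (intro sum_nonneg) auto
  have D_ge: "2 * real N * Off \<le> D"
    using dominant_diag_ge_offdiag[OF assms(3)] unfolding D_def Off_def .
  have near_D: "\<bar>Re (quad_form N R s) - D\<bar> \<le> Off" if "s \<in> ?S" for s
    using that unfolding D_def Off_def by (intro quad_form_unimodular_bound) simp
  have g: "g \<in> ?S" using greedy_output_Omega[OF assms(4)] by blast
  then have g_ge: "D - Off \<le> Re (quad_form N R g)"
    using near_D by fastforce
  have c: "0 \<le> c" "c \<le> 1" unfolding c_def using approx_ratio_bounds[of "real N"] by auto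
  have "c * (SUP s\<in>?S. Re (quad_form N R s)) \<le> Re (quad_form N R g)"
  proof (cases "N \<le> 2")
    case True
    have "(SUP s\<in>?S. Re (quad_form N R s)) \<le> Re (quad_form N R g)"
      using g greedy_output_optimal_small[OF assms(4,1) True] by (intro cSUP_least) blast+
    then have "c * (SUP s\<in>?S. Re (quad_form N R s)) \<le> c * Re (quad_form N R g)"
      using c by (intro mult_left_mono)
    moreover have "Off \<le> 2 * real N * Off"
      using mult_right_mono[of 1 "2 * real N" Off] assms(1) Off_nonneg by simp
    then have "0 \<le> Re (quad_form N R g)" using g_ge D_ge by linarith
    then have "c * Re (quad_form N R g) \<le> Re (quad_form N R g)"
      using c by (intro mult_left_le_one_le)
    ultimately show ?thesis by linarith
  next
    case False
    have "(SUP s\<in>?S. Re (quad_form N R s)) \<le> D + Off"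
    proof (rule cSUP_least)
      show "?S \<noteq> {}" using g by blast
      show "Re (quad_form N R s) \<le> D + Off" if "s \<in> ?S" for s
        using near_D[OF that] by linarith
    qed
    then have "c * (SUP s\<in>?S. Re (quad_form N R s)) \<le> c * (D + Off)"
      using c by (intro mult_left_mono)
    also have "\<dots> \<le> D - Off"
      using False approx_ratio_dominant[OF _ Off_nonneg D_ge] unfolding c_def by simp
    finally show ?thesis using g_ge by linarith
  qed
  then show ?thesis
    using trace_Rbar_le_trace[OF assms(2,3)] unfolding c_def by blast
qed

end
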